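(* Let $c \in (0,1/2]$, $t_1 \in [0,1-2c]$, $t_2 \in [t_1+c,1-c]$, and $p,q\in(0,1)$ with $p\neq q$. Then \[ W_1(\mu_p,\mu_q) = \frac{t_2-t_1}{1-c}\,|p-q|. \]
   Context: Let $S_1(x)=cx+t_1$ and $S_2(x)=cx+t_2$ on $[0,1]$, and let $F\subseteq[0,1]$ be the unique nonempty compact set with $F=S_1(F)\cup S_2(F)$. For $p\in(0,1)$, $\mu_p$ is the unique Borel probability measure on $[0,1]$ with $\mu_p = p\,\mu_p\circ S_1^{-1} + (1-p)\,\mu_p\circ S_2^{-1}$. For Borel probability measures $\mu,\nu$ on $[0,1]$ and $\rho\ge1$, $W_\rho(\mu,\nu)=\inf_{\gamma}\left(\int |x-y|^\rho\,d\gamma(x,y)\right)^{1/\rho}$, the infimum over all Borel probability measures $\gamma$ on $[0,1]^2$ with first marginal $\mu$ and second marginal $\nu$. *)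

theory Defs
  imports "HOL-Probability.Probability"
begin

text \<open>Borel probability measures on [0,1] are represented as probability measures on
  the Borel sets of the real line that give full mass to [0,1].\<close>

definition prob_on_unit :: "real measure \<Rightarrow> bool" where
  "prob_on_unit M \<longleftrightarrow> prob_space M \<and> sets M = sets borel \<and> emeasure M {0..1} = 1"

definition is_ss_measure :: "real \<Rightarrow> real \<Rightarrow> real \<Rightarrow> real \<Rightarrow> real measure \<Rightarrow> bool" where
  "is_ss_measure c t1 t2 p M \<longleftrightarrow> prob_on_unit M \<and>
     (\<forall>A \<in> sets borel. emeasure M A =
        ennreal p * emeasure M ((\<lambda>x. c * x + t1) -` A)
        + ennreal (1 - p) * emeasure M ((\<lambda>x. c * x + t2) -` A))"

definition ss_measure :: "real \<Rightarrow> real \<Rightarrow> real \<Rightarrow> real \<Rightarrow> real measure" where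
  "ss_measure c t1 t2 p = (THE M. is_ss_measure c t1 t2 p M)"

definition couplings :: "real measure \<Rightarrow> real measure \<Rightarrow> (real \<times> real) measure set" where
  "couplings \<mu> \<nu> = {\<gamma>. prob_space \<gamma> \<and> sets \<gamma> = sets borel \<and>
      distr \<gamma> borel fst = \<mu> \<and> distr \<gamma> borel snd = \<nu>}"

definition wasserstein :: "real \<Rightarrow> real measure \<Rightarrow> real measure \<Rightarrow> real" where
  "wasserstein \<rho> \<mu> \<nu> =
     (INF \<gamma> \<in> couplings \<mu> \<nu>. (\<integral>z. \<bar>fst z - snd z\<bar> powr \<rho> \<partial>\<gamma>)) powr (1 / \<rho>)"

end

theory Submission
  imports Defs
begin

text \<open>Let \<open>\<omega>\<close> be an i.i.d. sequence of uniform random variables on [0,1] and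
  \<open>X\<^sub>p \<omega> = \<Sum>\<^sub>k c\<^sup>k g\<^sub>p (\<omega>\<^sub>k)\<close>, where \<open>g\<^sub>p u = t\<^sub>1\<close> if \<open>u < p\<close> and \<open>t\<^sub>2\<close> otherwise.
  Splitting off the first digit shows that the law of \<open>X\<^sub>p\<close> satisfies the self-similarity
  equation, and characteristic functions show that this equation has only one solution,
  so \<open>\<mu>\<^sub>p\<close> is the law of \<open>X\<^sub>p\<close>. Since \<open>g\<^sub>p\<close> is antitone in \<open>p\<close>, the pair \<open>(X\<^sub>p, X\<^sub>q)\<close>
  is an ordered coupling of \<open>\<mu>\<^sub>p\<close> and \<open>\<mu>\<^sub>q\<close>, and an ordered coupling is optimal for \<open>W\<^sub>1\<close>:
  its cost equals the difference of the means, which bounds the cost of every coupling from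
  below. The mean of \<open>\<mu>\<^sub>p\<close> is read off the self-similarity equation:
  \<open>m = p (c m + t\<^sub>1) + (1 - p) (c m + t\<^sub>2)\<close>.
  The argument only needs \<open>0 < c < 1\<close> and \<open>0 \<le> t\<^sub>1 \<le> t\<^sub>2 \<le> 1 - c\<close>.\<close>

definition unit_uniform :: "real measure" where
  "unit_uniform = uniform_measure lborel {0..1}"

lemma prob_space_unit_uniform: "prob_space unit_uniform"
  unfolding unit_uniform_def by (rule prob_space_uniform_measure) auto

lemma sets_unit_uniform [simp, measurable_cong]: "sets unit_uniform = sets borel"
  unfolding unit_uniform_def by simp

lemma space_unit_uniform [simp]: "space unit_uniform = UNIV"
  unfolding unit_uniform_def by simp

lemma emeasure_unit_uniform_lessThan:
  assumes "0 < p" "p < 1" shows "emeasure unit_uniform {..<p} = ennreal p"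
proof -
  have "{0..1} \<inter> {..<p} = {0..<p::real}" using assms by auto
  then show ?thesis unfolding unit_uniform_def using assms by (simp add: divide_ennreal_def)
qed

lemma emeasure_unit_uniform_atLeast:
  assumes "0 < p" "p < 1" shows "emeasure unit_uniform {p..} = ennreal (1 - p)"
proof -
  have "{0..1} \<inter> {p..} = {p..1::real}" using assms by auto
  then show ?thesis unfolding unit_uniform_def using assms by (simp add: divide_ennreal_def)
qed

lemma nn_integral_unit_uniform_step:
  assumes "0 < p" "p < 1"
  shows "(\<integral>\<^sup>+u. (if u < p then a else b) \<partial>unit_uniform) = ennreal p * a + ennreal (1 - p) * b"
proof -
  have "(\<integral>\<^sup>+u. (if u < p then a else b) \<partial>unit_uniform)
      = (\<integral>\<^sup>+u. a * indicator {..<p} u + b * indicator {p..} u \<partial>unit_uniform)"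
    by (intro nn_integral_cong) (auto simp: indicator_def)
  also have "\<dots> = (\<integral>\<^sup>+u. a * indicator {..<p} u \<partial>unit_uniform)
                  + (\<integral>\<^sup>+u. b * indicator {p..} u \<partial>unit_uniform)"
    by (intro nn_integral_add) auto
  also have "\<dots> = ennreal p * a + ennreal (1 - p) * b"
    using assms by (simp add: nn_integral_cmult_indicator emeasure_unit_uniform_lessThan
        emeasure_unit_uniform_atLeast mult.commute)
  finally show ?thesis .
qed

lemma integral_unit_uniform_step:
  fixes a b :: "'b::{banach, second_countable_topology}"
  assumes "0 < p" "p < 1"
  shows "(\<integral>u. (if u < p then a else b) \<partial>unit_uniform) = p *\<^sub>R a + (1 - p) *\<^sub>R b"
proof -
  interpret prob_space unit_uniform by (rule prob_space_unit_uniform)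
  have "measure unit_uniform {..<p} = p" "measure unit_uniform {p..} = 1 - p"
    using assms emeasure_unit_uniform_lessThan[OF assms] emeasure_unit_uniform_atLeast[OF assms]
    by (simp_all add: measure_def)
  moreover have "(\<integral>u. (if u < p then a else b) \<partial>unit_uniform)
      = (\<integral>u. indicator {..<p} u *\<^sub>R a + indicator {p..} u *\<^sub>R b \<partial>unit_uniform)"
    by (intro Bochner_Integration.integral_cong) (auto simp: indicator_def)
  moreover have "\<dots> = (\<integral>u. indicator {..<p} u *\<^sub>R a \<partial>unit_uniform)
                     + (\<integral>u. indicator {p..} u *\<^sub>R b \<partial>unit_uniform)"
    by (intro Bochner_Integration.integral_add integrable_scaleR_left)
      (auto simp: emeasure_eq_measure)
  ultimately show ?thesis by (simp add: integral_scaleR_left emeasure_eq_measure)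
qed

definition ss_digit :: "real \<Rightarrow> real \<Rightarrow> real \<Rightarrow> real \<Rightarrow> real" where
  "ss_digit t1 t2 p u = (if u < p then t1 else t2)"

definition ss_step :: "real \<Rightarrow> real \<Rightarrow> real \<Rightarrow> real \<Rightarrow> real \<times> real \<Rightarrow> real" where
  "ss_step c t1 t2 p z = c * snd z + ss_digit t1 t2 p (fst z)"

definition ss_series :: "real \<Rightarrow> real \<Rightarrow> real \<Rightarrow> real \<Rightarrow> real stream \<Rightarrow> real" where
  "ss_series c t1 t2 p \<omega> = (\<Sum>k. c ^ k * ss_digit t1 t2 p (\<omega> !! k))"

lemma ss_digit_measurable [measurable]: "ss_digit t1 t2 p \<in> borel_measurable borel"
  unfolding ss_digit_def by measurable

lemma ss_series_measurable [measurable]: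
  "ss_series c t1 t2 p \<in> borel_measurable (stream_space unit_uniform)"
  unfolding ss_series_def by measurable

context
  fixes c t1 t2 :: real
  assumes c: "0 < c" "c < 1" and t: "0 \<le> t1" "t1 \<le> t2" "t2 \<le> 1 - c"
begin

lemma summable_ss_series: "summable (\<lambda>k. c ^ k * ss_digit t1 t2 p (\<omega> !! k))"
proof (rule summable_comparison_test)
  show "\<exists>N. \<forall>n\<ge>N. norm (c ^ n * ss_digit t1 t2 p (\<omega> !! n)) \<le> c ^ n * (1 - c)"
    using c t by (auto intro!: mult_left_mono simp: ss_digit_def)
  show "summable (\<lambda>n. c ^ n * (1 - c))"
    using c by (intro summable_mult2 summable_geometric) auto
qed

lemma ss_series_nonneg: "0 \<le> ss_series c t1 t2 p \<omega>"
  unfolding ss_series_def using summable_ss_series c t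
  by (intro suminf_nonneg) (auto simp: ss_digit_def)

lemma ss_series_le_1: "ss_series c t1 t2 p \<omega> \<le> 1"
proof -
  have "ss_series c t1 t2 p \<omega> \<le> (\<Sum>n. c ^ n * (1 - c))"
    unfolding ss_series_def using summable_ss_series c t
    by (intro suminf_le summable_mult2 summable_geometric)
      (auto intro!: mult_left_mono simp: ss_digit_def)
  also have "\<dots> = 1"
    using c by (simp add: suminf_mult2[symmetric] suminf_geometric)
  finally show ?thesis .
qed

lemma ss_series_Stream:
  "ss_series c t1 t2 p (u ## \<omega>) = ss_step c t1 t2 p (u, ss_series c t1 t2 p \<omega>)"
proof -
  have "ss_series c t1 t2 p (u ## \<omega>) - ss_digit t1 t2 p u
      = (\<Sum>k. c ^ Suc k * ss_digit t1 t2 p ((u ## \<omega>) !! Suc k))"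
    unfolding ss_series_def using suminf_split_head[OF summable_ss_series, of p "u ## \<omega>"]
    by simp
  also have "\<dots> = c * ss_series c t1 t2 p \<omega>"
    unfolding ss_series_def using suminf_mult[OF summable_ss_series, of c p \<omega>]
    by (simp add: mult.assoc)
  finally show ?thesis by (simp add: ss_step_def)
qed

lemma ss_series_antimono: "q \<le> p \<Longrightarrow> ss_series c t1 t2 p \<omega> \<le> ss_series c t1 t2 q \<omega>"
  unfolding ss_series_def using summable_ss_series c t
  by (intro suminf_le) (auto intro!: mult_left_mono simp: ss_digit_def)

lemma is_ss_measure_distr_ss_series:
  assumes p: "0 < p" "p < 1"
  shows "is_ss_measure c t1 t2 p (distr (stream_space unit_uniform) borel (ss_series c t1 t2 p))"
proof -
  interpret U: prob_space unit_uniform by (rule prob_space_unit_uniform)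
  interpret S: prob_space "stream_space unit_uniform" by (rule U.prob_space_stream_space)
  let ?S = "stream_space unit_uniform" and ?X = "ss_series c t1 t2 p"
  let ?M = "distr ?S borel ?X"
  have "emeasure ?M {0..1} = emeasure ?S (?X -` {0..1} \<inter> space ?S)"
    by (rule emeasure_distr) auto
  also have "?X -` {0..1} \<inter> space ?S = space ?S"
    using ss_series_nonneg ss_series_le_1 by auto
  finally have "prob_on_unit ?M"
    unfolding prob_on_unit_def by (simp add: S.emeasure_space_1 S.prob_space_distr)
  moreover have "emeasure ?M A = ennreal p * emeasure ?M ((\<lambda>x. c * x + t1) -` A)
        + ennreal (1 - p) * emeasure ?M ((\<lambda>x. c * x + t2) -` A)" if [measurable]: "A \<in> sets borel" for A
  proof -
    have "emeasure ?M A = emeasure ?S (?X -` A \<inter> space ?S)"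
      by (rule emeasure_distr) auto
    also have "\<dots> = (\<integral>\<^sup>+u. emeasure ?S {\<omega>\<in>space ?S. u ## \<omega> \<in> ?X -` A \<inter> space ?S} \<partial>unit_uniform)"
      by (rule U.emeasure_stream_space) measurable
    also have "\<dots> = (\<integral>\<^sup>+u. (if u < p then emeasure ?M ((\<lambda>x. c * x + t1) -` A)
                  else emeasure ?M ((\<lambda>x. c * x + t2) -` A)) \<partial>unit_uniform)"
    proof (intro nn_integral_cong)
      have "(\<lambda>x. c * x + t) -` A \<in> sets borel" for t
        by (rule measurable_sets_borel[of _ borel]) auto
      then show "emeasure ?S {\<omega>\<in>space ?S. u ## \<omega> \<in> ?X -` A \<inter> space ?S}
          = (if u < p then emeasure ?M ((\<lambda>x. c * x + t1) -` A)
             else emeasure ?M ((\<lambda>x. c * x + t2) -` A))" for u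
        by (auto simp: emeasure_distr space_stream_space ss_series_Stream ss_step_def ss_digit_def
            intro!: arg_cong[where f="emeasure ?S"])
    qed
    finally show ?thesis by (simp add: nn_integral_unit_uniform_step p)
  qed
  ultimately show ?thesis unfolding is_ss_measure_def by blast
qed

end

lemma is_ss_measure_real_distribution:
  "is_ss_measure c t1 t2 p M \<Longrightarrow> real_distribution M"
  unfolding is_ss_measure_def prob_on_unit_def real_distribution_def real_distribution_axioms_def
  by simp

lemma is_ss_measure_eq_distr_ss_step:
  assumes ss: "is_ss_measure c t1 t2 p M" and p: "0 < p" "p < 1"
  shows "M = distr (unit_uniform \<Otimes>\<^sub>M M) borel (ss_step c t1 t2 p)"
proof -
  interpret real_distribution M by (rule is_ss_measure_real_distribution[OF ss])
  have step[measurable]: "ss_step c t1 t2 p \<in> borel_measurable (unit_uniform \<Otimes>\<^sub>M M)"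
    unfolding ss_step_def by measurable
  show ?thesis
  proof (rule measure_eqI)
    fix A assume "A \<in> sets M"
    then have [measurable]: "A \<in> sets borel" by simp
    have "emeasure (distr (unit_uniform \<Otimes>\<^sub>M M) borel (ss_step c t1 t2 p)) A
        = (\<integral>\<^sup>+u. emeasure M (Pair u -` (ss_step c t1 t2 p -` A \<inter> space (unit_uniform \<Otimes>\<^sub>M M)))
            \<partial>unit_uniform)"
      by (simp add: emeasure_distr emeasure_pair_measure_alt[OF measurable_sets[OF step]]
          del: vimage_Int)
    also have "\<dots> = (\<integral>\<^sup>+u. (if u < p then emeasure M ((\<lambda>x. c * x + t1) -` A)
          else emeasure M ((\<lambda>x. c * x + t2) -` A)) \<partial>unit_uniform)"
      by (intro nn_integral_cong) (auto intro!: arg_cong[where f="emeasure M"]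
            simp: ss_step_def ss_digit_def space_pair_measure)
    also have "\<dots> = emeasure M A"
      using ss unfolding is_ss_measure_def by (simp add: nn_integral_unit_uniform_step[OF p])
    finally show "emeasure M A = emeasure (distr (unit_uniform \<Otimes>\<^sub>M M) borel (ss_step c t1 t2 p)) A"
      by simp
  qed simp
qed

lemma integral_is_ss_measure:
  fixes f :: "real \<Rightarrow> 'b::{banach, second_countable_topology}"
  assumes ss: "is_ss_measure c t1 t2 p M" and p: "0 < p" "p < 1"
    and f[measurable]: "f \<in> borel_measurable borel" and int: "integrable M f"
  shows "(\<integral>x. f x \<partial>M) = p *\<^sub>R (\<integral>x. f (c * x + t1) \<partial>M) + (1 - p) *\<^sub>R (\<integral>x. f (c * x + t2) \<partial>M)"
proof -
  interpret real_distribution M by (rule is_ss_measure_real_distribution[OF ss])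
  interpret U: prob_space unit_uniform by (rule prob_space_unit_uniform)
  interpret pair_sigma_finite unit_uniform M ..
  let ?P = "unit_uniform \<Otimes>\<^sub>M M"
  have [measurable]: "ss_step c t1 t2 p \<in> borel_measurable ?P"
    unfolding ss_step_def by measurable
  have M: "M = distr ?P borel (ss_step c t1 t2 p)"
    by (rule is_ss_measure_eq_distr_ss_step[OF ss p])
  then have int_P: "integrable ?P (\<lambda>z. f (ss_step c t1 t2 p z))"
    using int integrable_distr_eq[of "ss_step c t1 t2 p" ?P borel f] by simp
  have "(\<integral>x. f x \<partial>M) = (\<integral>z. f (ss_step c t1 t2 p z) \<partial>?P)"
    by (subst M) (simp add: integral_distr)
  also have "\<dots> = (\<integral>u. (\<integral>x. f (ss_step c t1 t2 p (u, x)) \<partial>M) \<partial>unit_uniform)"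
    by (rule integral_fst'[OF int_P, symmetric])
  also have "\<dots> = (\<integral>u. (if u < p then (\<integral>x. f (c * x + t1) \<partial>M) else (\<integral>x. f (c * x + t2) \<partial>M))
      \<partial>unit_uniform)"
    by (intro Bochner_Integration.integral_cong) (auto simp: ss_step_def ss_digit_def)
  finally show ?thesis by (simp add: integral_unit_uniform_step[OF p])
qed

lemma char_is_ss_measure:
  assumes ss: "is_ss_measure c t1 t2 p M" and p: "0 < p" "p < 1"
  shows "char M \<xi> = (p *\<^sub>R iexp (\<xi> * t1) + (1 - p) *\<^sub>R iexp (\<xi> * t2)) * char M (\<xi> * c)"
proof -
  interpret real_distribution M by (rule is_ss_measure_real_distribution[OF ss])
  have int: "integrable M (\<lambda>x. iexp (\<xi> * x))"
    by (rule integrable_const_bound[where B=1]) auto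
  have char_eq: "char M \<xi> = p *\<^sub>R (\<integral>x. iexp (\<xi> * (c * x + t1)) \<partial>M)
      + (1 - p) *\<^sub>R (\<integral>x. iexp (\<xi> * (c * x + t2)) \<partial>M)"
    unfolding char_def by (rule integral_is_ss_measure[OF ss p _ int]) simp
  have "iexp (\<xi> * (c * x + t)) = iexp (\<xi> * t) * iexp (\<xi> * c * x)" for t x
    by (simp add: exp_add[symmetric] algebra_simps)
  then have shift: "(\<integral>x. iexp (\<xi> * (c * x + t)) \<partial>M) = iexp (\<xi> * t) * char M (\<xi> * c)" for t
    by (simp add: char_def)
  show ?thesis
    unfolding char_eq shift by (simp add: algebra_simps)
qed

lemma le_at_zero_if_le_rescaled:
  fixes D :: "real \<Rightarrow> real"
  assumes "isCont D 0" "\<bar>c\<bar> < 1" and le: "\<And>\<xi>. D \<xi> \<le> D (\<xi> * c)"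
  shows "D \<xi> \<le> D 0"
proof -
  have "D \<xi> \<le> D (\<xi> * c ^ n)" for n
  proof (induction n arbitrary: \<xi>)
    case (Suc n)
    have "D \<xi> \<le> D (\<xi> * c)" by (rule le)
    also have "\<dots> \<le> D (\<xi> * c * c ^ n)" by (rule Suc)
    finally show ?case by (simp add: mult.assoc mult.commute)
  qed simp
  moreover have "(\<lambda>n. D (\<xi> * c ^ n)) \<longlonglongrightarrow> D 0"
    using assms
    by (intro isCont_tendsto_compose[of 0 D] tendsto_mult_right_zero LIMSEQ_abs_realpow_zero2)
  ultimately show ?thesis
    by (intro LIMSEQ_le_const) auto
qed

lemma is_ss_measure_unique:
  assumes c: "\<bar>c\<bar> < 1" and p: "0 < p" "p < 1"
    and ss1: "is_ss_measure c t1 t2 p M1" and ss2: "is_ss_measure c t1 t2 p M2"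
  shows "M1 = M2"
proof -
  interpret M1: real_distribution M1 by (rule is_ss_measure_real_distribution[OF ss1])
  interpret M2: real_distribution M2 by (rule is_ss_measure_real_distribution[OF ss2])
  define D where "D \<xi> = norm (char M1 \<xi> - char M2 \<xi>)" for \<xi>
  have step: "D \<xi> \<le> D (\<xi> * c)" for \<xi>
  proof -
    let ?h = "p *\<^sub>R iexp (\<xi> * t1) + (1 - p) *\<^sub>R iexp (\<xi> * t2)"
    have "norm ?h \<le> norm (p *\<^sub>R iexp (\<xi> * t1)) + norm ((1 - p) *\<^sub>R iexp (\<xi> * t2))"
      by (rule norm_triangle_ineq)
    also have "\<dots> = 1" using p by simp
    finally have "norm ?h \<le> 1" .
    moreover have "D \<xi> = norm ?h * D (\<xi> * c)"
      unfolding D_def char_is_ss_measure[OF ss1 p, of \<xi>] char_is_ss_measure[OF ss2 p, of \<xi>]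
      by (simp add: norm_mult right_diff_distrib[symmetric])
    ultimately show ?thesis
      using mult_right_mono[of "norm ?h" 1 "D (\<xi> * c)"] by (simp add: D_def)
  qed
  have "isCont D 0"
    unfolding D_def by (intro continuous_intros M1.isCont_char M2.isCont_char)
  then have "D \<xi> \<le> D 0" for \<xi>
    using c step by (rule le_at_zero_if_le_rescaled)
  then have "char M1 = char M2"
    by (auto simp: D_def M1.char_zero M2.char_zero)
  then show ?thesis
    by (rule Levy_uniqueness[OF M1.real_distribution_axioms M2.real_distribution_axioms])
qed

lemma integral_id_is_ss_measure:
  assumes c: "c \<noteq> 1" and p: "0 < p" "p < 1" and ss: "is_ss_measure c t1 t2 p M"
  shows "integrable M (\<lambda>x. x)" "(\<integral>x. x \<partial>M) = (p * t1 + (1 - p) * t2) / (1 - c)"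
proof -
  interpret real_distribution M by (rule is_ss_measure_real_distribution[OF ss])
  have "prob {0..1} = 1"
    using ss unfolding is_ss_measure_def prob_on_unit_def by (simp add: emeasure_eq_measure)
  then have "AE x in M. x \<in> {0..1}"
    by (subst AE_in_set_eq_1) auto
  then have "AE x in M. norm x \<le> 1"
    by eventually_elim auto
  then show int: "integrable M (\<lambda>x. x)"
    by (rule integrable_const_bound) simp
  let ?m = "\<integral>x. x \<partial>M"
  have affine: "(\<integral>x. c * x + t \<partial>M) = c * ?m + t" for t
    using int prob_space by simp
  have "?m = p *\<^sub>R (\<integral>x. c * x + t1 \<partial>M) + (1 - p) *\<^sub>R (\<integral>x. c * x + t2 \<partial>M)"
    by (rule integral_is_ss_measure[OF ss p _ int]) simp
  then have "?m = p * (c * ?m + t1) + (1 - p) * (c * ?m + t2)"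
    unfolding affine by simp
  then show "?m = (p * t1 + (1 - p) * t2) / (1 - c)"
    using c by (simp add: field_simps)
qed

lemma ss_measure_eqI:
  assumes "\<bar>c\<bar> < 1" "0 < p" "p < 1" and ss: "is_ss_measure c t1 t2 p M"
  shows "ss_measure c t1 t2 p = M"
  unfolding ss_measure_def
proof (rule the_equality)
  show "M' = M" if "is_ss_measure c t1 t2 p M'" for M'
    using assms that by (blast intro: is_ss_measure_unique)
qed (rule ss)

lemma integral_abs_eq_abs_integral:
  fixes f :: "'a \<Rightarrow> real"
  assumes "(\<forall>x\<in>space M. 0 \<le> f x) \<or> (\<forall>x\<in>space M. f x \<le> 0)"
  shows "(\<integral>x. \<bar>f x\<bar> \<partial>M) = \<bar>\<integral>x. f x \<partial>M\<bar>"
  using assms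
proof
  assume "\<forall>x\<in>space M. 0 \<le> f x"
  then show ?thesis
    by (simp add: Bochner_Integration.integral_cong[of M M "\<lambda>x. \<bar>f x\<bar>" f] Bochner_Integration.integral_nonneg)
next
  assume nonpos: "\<forall>x\<in>space M. f x \<le> 0"
  then have "(\<integral>x. \<bar>f x\<bar> \<partial>M) = - (\<integral>x. f x \<partial>M)"
    by (simp add: Bochner_Integration.integral_cong[of M M "\<lambda>x. \<bar>f x\<bar>" "\<lambda>x. - f x"])
  moreover have "0 \<le> (\<integral>x. - f x \<partial>M)"
    by (rule Bochner_Integration.integral_nonneg) (use nonpos in auto)
  ultimately show ?thesis by simp
qed

lemma integral_eq_if_distr_eq:
  fixes f :: "'a \<Rightarrow> real" and g :: "'b \<Rightarrow> real"
  assumes eq: "distr M borel f = distr N borel g"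
    and [measurable]: "f \<in> borel_measurable M" "g \<in> borel_measurable N"
  shows "integrable M f \<longleftrightarrow> integrable N g" "(\<integral>x. f x \<partial>M) = (\<integral>x. g x \<partial>N)"
proof -
  have "integrable M f \<longleftrightarrow> integrable (distr M borel f) (\<lambda>x. x)"
    by (simp add: integrable_distr_eq)
  also have "\<dots> \<longleftrightarrow> integrable N g"
    unfolding eq by (simp add: integrable_distr_eq)
  finally show "integrable M f \<longleftrightarrow> integrable N g" .
  have "(\<integral>x. f x \<partial>M) = (\<integral>x. x \<partial>distr M borel f)"
    by (simp add: integral_distr)
  also have "\<dots> = (\<integral>x. g x \<partial>N)"
    unfolding eq by (simp add: integral_distr)
  finally show "(\<integral>x. f x \<partial>M) = (\<integral>x. g x \<partial>N)" .
qed

lemma measurable_fst_snd_borel [measurable]: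
  "fst \<in> borel_measurable (borel :: (real \<times> real) measure)"
  "snd \<in> borel_measurable (borel :: (real \<times> real) measure)"
  using measurable_fst[of "borel :: real measure" "borel :: real measure"]
    measurable_snd[of "borel :: real measure" "borel :: real measure"]
  by (simp_all add: borel_prod)

lemma wasserstein_1_ordered_coupling:
  fixes X Y :: "'a \<Rightarrow> real"
  assumes M: "prob_space M" and int: "integrable M X" "integrable M Y"
    and ordered: "(\<forall>\<omega>\<in>space M. X \<omega> \<le> Y \<omega>) \<or> (\<forall>\<omega>\<in>space M. Y \<omega> \<le> X \<omega>)"
  shows "wasserstein 1 (distr M borel X) (distr M borel Y) = \<bar>(\<integral>\<omega>. X \<omega> \<partial>M) - (\<integral>\<omega>. Y \<omega> \<partial>M)\<bar>"
proof -
  interpret prob_space M by (rule M)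
  have [measurable]: "X \<in> borel_measurable M" "Y \<in> borel_measurable M"
    using int by auto
  let ?cost = "\<lambda>\<gamma>. \<integral>z. \<bar>fst z - snd z\<bar> powr 1 \<partial>\<gamma>"
  let ?C = "couplings (distr M borel X) (distr M borel Y)"
  let ?d = "\<bar>(\<integral>\<omega>. X \<omega> \<partial>M) - (\<integral>\<omega>. Y \<omega> \<partial>M)\<bar>"
  define \<gamma>\<^sub>0 where "\<gamma>\<^sub>0 = distr M borel (\<lambda>\<omega>. (X \<omega>, Y \<omega>))"
  have coupling: "\<gamma>\<^sub>0 \<in> ?C"
    unfolding couplings_def \<gamma>\<^sub>0_def by (simp add: prob_space_distr distr_distr comp_def)
  have cost: "?cost \<gamma>\<^sub>0 = ?d"
  proof -
    have "?cost \<gamma>\<^sub>0 = (\<integral>\<omega>. \<bar>X \<omega> - Y \<omega>\<bar> \<partial>M)"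
      unfolding \<gamma>\<^sub>0_def by (simp add: integral_distr)
    also have "\<dots> = \<bar>\<integral>\<omega>. X \<omega> - Y \<omega> \<partial>M\<bar>"
      using ordered by (intro integral_abs_eq_abs_integral) auto
    finally show ?thesis
      using int by simp
  qed
  have lower: "?d \<le> ?cost \<gamma>" if "\<gamma> \<in> ?C" for \<gamma>
  proof -
    have sets: "sets \<gamma> = sets borel" and marg: "distr \<gamma> borel fst = distr M borel X"
      "distr \<gamma> borel snd = distr M borel Y"
      using that by (simp_all add: couplings_def)
    have [measurable]: "fst \<in> borel_measurable \<gamma>" "snd \<in> borel_measurable \<gamma>"
      by (simp_all add: measurable_cong_sets[OF sets refl])
    note fst = integral_eq_if_distr_eq[OF marg(1)] and snd = integral_eq_if_distr_eq[OF marg(2)]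
    have "?d = \<bar>\<integral>z. fst z - snd z \<partial>\<gamma>\<bar>"
      using fst snd int by simp
    also have "\<dots> \<le> (\<integral>z. \<bar>fst z - snd z\<bar> \<partial>\<gamma>)"
      using integral_norm_bound[of \<gamma> "\<lambda>z. fst z - snd z"] by simp
    finally show ?thesis by simp
  qed
  have "(INF \<gamma>\<in>?C. ?cost \<gamma>) = ?d"
  proof (rule cInf_eq_minimum)
    show "?d \<in> ?cost ` ?C"
      using coupling cost by (rule rev_image_eqI[OF _ sym])
  qed (use lower in auto)
  then show ?thesis
    unfolding wasserstein_def by simp
qed

theorem corollary2p6:
  fixes c t1 t2 p q :: real
  assumes "0 < c" "c \<le> 1/2"
    and "0 \<le> t1" "t1 \<le> 1 - 2*c"
    and "t1 + c \<le> t2" "t2 \<le> 1 - c"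
    and "0 < p" "p < 1" "0 < q" "q < 1" "p \<noteq> q"
  shows "wasserstein 1 (ss_measure c t1 t2 p) (ss_measure c t1 t2 q)
           = (t2 - t1) / (1 - c) * \<bar>p - q\<bar>"
proof -
  have c: "0 < c" "c < 1" and t: "0 \<le> t1" "t1 \<le> t2" "t2 \<le> 1 - c"
    using assms by auto
  let ?S = "stream_space unit_uniform" and ?X = "ss_series c t1 t2"
  interpret S: prob_space ?S
    by (rule prob_space.prob_space_stream_space[OF prob_space_unit_uniform])
  have ss: "is_ss_measure c t1 t2 r (distr ?S borel (?X r))" if "0 < r" "r < 1" for r
    using is_ss_measure_distr_ss_series[OF c t that] .
  have law: "ss_measure c t1 t2 r = distr ?S borel (?X r)" if "0 < r" "r < 1" for r
    using c that by (intro ss_measure_eqI ss) auto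
  have int: "integrable ?S (?X r)" for r
    by (rule S.integrable_const_bound[where B=1])
      (use ss_series_nonneg[OF c t] ss_series_le_1[OF c t] in auto)
  have mean: "(\<integral>\<omega>. ?X r \<omega> \<partial>?S) = (r * t1 + (1 - r) * t2) / (1 - c)" if "0 < r" "r < 1" for r
    using integral_id_is_ss_measure(2)[OF _ that ss[OF that]] c by (simp add: integral_distr)
  have "(\<forall>\<omega>\<in>space ?S. ?X p \<omega> \<le> ?X q \<omega>) \<or> (\<forall>\<omega>\<in>space ?S. ?X q \<omega> \<le> ?X p \<omega>)"
    using ss_series_antimono[OF c t] by (cases "p \<le> q") auto
  then have "wasserstein 1 (ss_measure c t1 t2 p) (ss_measure c t1 t2 q)
      = \<bar>(\<integral>\<omega>. ?X p \<omega> \<partial>?S) - (\<integral>\<omega>. ?X q \<omega> \<partial>?S)\<bar>"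
    unfolding law[OF \<open>0 < p\<close> \<open>p < 1\<close>] law[OF \<open>0 < q\<close> \<open>q < 1\<close>]
    by (rule wasserstein_1_ordered_coupling[OF S.prob_space_axioms int int])
  also have "\<dots> = \<bar>(p * t1 + (1 - p) * t2) / (1 - c) - (q * t1 + (1 - q) * t2) / (1 - c)\<bar>"
    using assms by (simp add: mean)
  also have "\<dots> = \<bar>(t2 - t1) / (1 - c) * (q - p)\<bar>"
  proof -
    have "(p * t1 + (1 - p) * t2) - (q * t1 + (1 - q) * t2) = (t2 - t1) * (q - p)"
      by (simp add: algebra_simps)
    then show ?thesis
      by (simp add: diff_divide_distrib[symmetric])
  qed
  finally show ?thesis
    using c t by (simp add: abs_mult abs_minus_commute)
qed

end
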